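(* Let $I=(I_1,\dots,I_d)\in\mathcal I_d$. If $I_j=I_k$ for some $j<k$, then $\omega_I=0$; if $I_j=\overline{I_k}$ for some $j\leq k$, then $\omega_I=0$.
   Context: $U_-$ is the universal enveloping algebra of the Lie superalgebra $L_-=L_{-2}\oplus L_{-1}$, where $L_{-2}$ has basis $\partial_1,\dots,\partial_5$ (even, central in $L_-$), $L_{-1}$ is spanned by odd elements $d_{ij}=-d_{ji}$ ($i,j\in[5]$, $d_{ii}=0$) with $[d_{ij},d_{kl}]=\varepsilon_{ijkl}\partial_{t_{ijkl}}$; if $|\{i,j,k,l\}|=4$, $t_{ijkl}$ is the fifth element of $[5]$ and $\varepsilon_{ijkl}$ the sign of the permutation $(i,j,k,l,t_{ijkl})$, otherwise $\varepsilon_{ijkl}=0$. $\mathcal I_d$ is the set of $d$-tuples of ordered pairs $I_l=(i_l,j_l)\in[5]^2$, $\overline{(i,j)}=(j,i)$, $d_I=d_{i_1j_1}\cdots d_{i_dj_d}$. For $k\neq l$ in $[d]$, $D_{\{k,l\}}(I)=\tfrac12(-1)^{k+l}\varepsilon_{i_kj_ki_lj_l}\partial_{t_{i_kj_ki_lj_l}}$. $\mathrm{SIF}_d$ is the set of sets $S$ of pairwise disjoint 2-element subsets of $[d]$; two disjoint pairs $\{k,l\},\{h,m\}$ cross if exactly one of $k,l$ is strictly between $h$ and $m$; $c(S)$ is the number of crossing pairs in $S$. $D_S(I)=\prod_{P\in S}D_P(I)$ ($D_\emptyset=1$), $C_S(I)$ is $I$ with all $I_j$, $j\in\bigcup S$,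 deleted, and $\omega_I=\sum_{S\in \mathrm{SIF}_d}(-1)^{c(S)}D_S(I)\,d_{C_S(I)}$. *)

theory Defs
  imports Main "HOL.Real_Vector_Spaces"
begin

text \<open>Positions in an index tuple I are 0-based
  (position k of the list corresponds to I_(k+1) of the paper); all signs
  used below depend only on parities/relative order, so this shift is harmless.\<close>

definition inv_count :: "nat list \<Rightarrow> nat" where
  "inv_count xs = card {(a, b). a < b \<and> b < length xs \<and> xs ! a > xs ! b}"

definition perm_sign :: "nat list \<Rightarrow> int" where
  "perm_sign xs = (-1) ^ inv_count xs"

definition tt :: "nat \<Rightarrow> nat \<Rightarrow> nat \<Rightarrow> nat \<Rightarrow> nat" where
  "tt i j k l = (THE t. t \<in> {1..5} - {i, j, k, l})"

definition eps :: "nat \<Rightarrow> nat \<Rightarrow> nat \<Rightarrow> nat \<Rightarrow> int" where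
  "eps i j k l =
     (if {i, j, k, l} \<subseteq> {1..5} \<and> card {i, j, k, l} = 4
      then perm_sign [i, j, k, l, tt i j k l] else 0)"

text \<open>Defining relations of U_-: the family (del, dd) of elements of an associative
  real algebra satisfies the relations of the generators of U(L_-).
  Since U_- is universal for these relations, an identity among the generators holds in
  U_- iff it holds for every such family in every such algebra.\<close>
definition Uminus_rels :: "(nat \<Rightarrow> 'a::real_algebra_1) \<Rightarrow> (nat \<Rightarrow> nat \<Rightarrow> 'a) \<Rightarrow> bool" where
  "Uminus_rels del dd \<longleftrightarrow>
     (\<forall>i\<in>{1..5}. \<forall>j\<in>{1..5}. del i * del j = del j * del i) \<and>
     (\<forall>i\<in>{1..5}. \<forall>k\<in>{1..5}. \<forall>l\<in>{1..5}. del i * dd k l = dd k l * del i) \<and>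
     (\<forall>i\<in>{1..5}. \<forall>j\<in>{1..5}. dd i j = - dd j i) \<and>
     (\<forall>i\<in>{1..5}. \<forall>j\<in>{1..5}. \<forall>k\<in>{1..5}. \<forall>l\<in>{1..5}.
        dd i j * dd k l + dd k l * dd i j = of_int (eps i j k l) * del (tt i j k l))"

type_synonym idx = "(nat \<times> nat) list"

definition valid_idx :: "idx \<Rightarrow> bool" where
  "valid_idx I \<longleftrightarrow> (\<forall>p\<in>set I. fst p \<in> {1..5} \<and> snd p \<in> {1..5})"

definition dmon :: "(nat \<Rightarrow> nat \<Rightarrow> 'a::real_algebra_1) \<Rightarrow> idx \<Rightarrow> 'a" where
  "dmon dd I = prod_list (map (\<lambda>(i, j). dd i j) I)"

definition Dkl :: "(nat \<Rightarrow> 'a::real_algebra_1) \<Rightarrow> idx \<Rightarrow> nat \<Rightarrow> nat \<Rightarrow> 'a" where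
  "Dkl del I k l =
     (let (a, b) = I ! k; (c, e) = I ! l in
      scaleR (1/2) (of_int ((-1) ^ (k + l) * eps a b c e) * del (tt a b c e)))"

definition sif :: "nat \<Rightarrow> nat set set set" where
  "sif d = {S. (\<forall>P\<in>S. P \<subseteq> {0..<d} \<and> card P = 2) \<and>
               (\<forall>P\<in>S. \<forall>Q\<in>S. P \<noteq> Q \<longrightarrow> P \<inter> Q = {})}"

definition crosses :: "nat set \<Rightarrow> nat set \<Rightarrow> bool" where
  "crosses P Q \<longleftrightarrow> card {x\<in>P. Min Q < x \<and> x < Max Q} = 1"

definition ncross :: "nat set set \<Rightarrow> nat" where
  "ncross S = card {{P, Q} | P Q. P \<in> S \<and> Q \<in> S \<and> P \<noteq> Q \<and> crosses P Q}"

text \<open>D_S(I) = product of D_P(I), P in S (these commute; taken in order of min P).\<close>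
definition DS :: "(nat \<Rightarrow> 'a::real_algebra_1) \<Rightarrow> idx \<Rightarrow> nat set set \<Rightarrow> 'a" where
  "DS del I S = prod_list (map (\<lambda>k. prod_list (map (\<lambda>l.
       if {k, l} \<in> S \<and> k < l then Dkl del I k l else 1) [0..<length I])) [0..<length I])"

definition CS :: "idx \<Rightarrow> nat set set \<Rightarrow> idx" where
  "CS I S = nths I (- \<Union>S)"

definition omega :: "(nat \<Rightarrow> 'a::real_algebra_1) \<Rightarrow> (nat \<Rightarrow> nat \<Rightarrow> 'a) \<Rightarrow> idx \<Rightarrow> 'a" where
  "omega del dd I = (\<Sum>S\<in>sif (length I).
      of_int ((-1) ^ ncross S) * DS del I S * dmon dd (CS I S))"

end

theory Submission
  imports Defs "HOL-Library.Multiset" "HOL-Combinatorics.Transposition"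
begin

text \<open>Both statements follow from two sign rules.

  Swapping two adjacent entries k, k+1 of I negates omega_I. Split SIF_d: a set S covering
  neither k nor k+1 is grouped with S plus the pair {k, k+1}; as D_{k,k+1} is -1/2 times the
  anticommutator of d_(I_k) and d_(I_(k+1)), which is central, the four terms for I and for the
  swapped tuple cancel. Any other S is matched, through the transposition (k k+1), with a set
  for the swapped tuple: the factors (-1)^(k+l) of D change by -1 for each of k, k+1 covered
  by S, and the crossing number changes parity exactly when both are covered, so the two terms
  are opposite.

  Reversing a single entry (i, j) to (j, i) negates omega_I as well: it flips the sign of
  every eps involving that entry, and otherwise of the factor d_ij in C_S(I).

  So if I_j = I_k, moving I_k next to I_j by adjacent swaps and then swapping the two equal
  neighbours gives omega_I = - omega_I. If I_j is the reverse of I_k, one reversal leads back to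
  the first case, or leaves I unchanged when j = k.\<close>

section \<open>Products of commuting factors\<close>

lemma prod_list_commute:
  fixes x :: "'a::monoid_mult"
  assumes "\<And>y. y \<in> set ys \<Longrightarrow> x * y = y * x"
  shows "x * prod_list ys = prod_list ys * x"
  using assms
proof (induction ys)
  case (Cons y ys)
  have "x * prod_list (y # ys) = (x * y) * prod_list ys" by (simp add: mult.assoc)
  also have "\<dots> = y * (x * prod_list ys)" using Cons.prems by (simp add: mult.assoc)
  also have "\<dots> = prod_list (y # ys) * x" using Cons by (simp add: mult.assoc)
  finally show ?case .
qed simp

lemma prod_list_mset_eq:
  fixes xs ys :: "'a::monoid_mult list"
  assumes comm: "\<And>x y. x \<in> C \<Longrightarrow> y \<in> C \<Longrightarrow> x * y = y * x"
    and "set xs \<subseteq> C" and "mset xs = mset ys"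
  shows "prod_list xs = prod_list ys"
  using assms(2,3)
proof (induction xs arbitrary: ys)
  case (Cons x xs)
  then have "x \<in> set ys" by (metis list.set_intros(1) set_mset_mset)
  then obtain ys1 ys2 where ys: "ys = ys1 @ x # ys2" by (meson split_list)
  have "set ys1 \<subseteq> C"
    using Cons.prems ys by (metis Un_iff mset_eq_setD set_append subset_code(1))
  then have "x * prod_list ys1 = prod_list ys1 * x"
    using Cons.prems(1) by (intro prod_list_commute comm) auto
  then have "prod_list ys = x * prod_list (ys1 @ ys2)"
    unfolding ys by (simp flip: mult.assoc)
  moreover have "prod_list xs = prod_list (ys1 @ ys2)"
    using Cons.prems ys by (intro Cons.IH) auto
  ultimately show ?case by simp
qed simp

lemma prod_list_map_filter_if:
  "prod_list (map (\<lambda>x. if P x then f x else 1) xs) = prod_list (map f (filter P xs))"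
  by (induction xs) auto

lemma prod_list_map_product:
  "prod_list (map f (List.product xs ys)) = prod_list (map (\<lambda>x. prod_list (map (\<lambda>y. f (x, y)) ys)) xs)"
  by (induction xs) (auto simp: o_def)

lemma prod_list_of_real_mult:
  "prod_list (map (\<lambda>x. (of_real (c x) :: 'a::real_algebra_1) * g x) xs) =
   of_real (prod_list (map c xs)) * prod_list (map g xs)"
  by (induction xs) (simp_all add: of_real_def)

lemma mult_of_real_commute: "of_real r * x = x * (of_real r :: 'a::real_algebra_1)"
  by (simp add: of_real_def)

lemma vimage_involution:
  assumes "\<And>x. f (f x) = x"
  shows "f -` A = f ` A"
proof (intro equalityI subsetI)
  fix x assume "x \<in> f -` A"
  then show "x \<in> f ` A"
    using image_eqI[of x f "f x" A] assms by simp
qed (use assms in auto)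

lemma self_eq_neg_imp_zero:
  fixes x :: "'a::real_vector"
  assumes "x = - x"
  shows "x = 0"
proof -
  have "(2::real) *\<^sub>R x = 0"
    using assms by (metis add.right_inverse scaleR_2)
  then show ?thesis by simp
qed

lemma minus_half_diff_half: "- ((1/2 :: real) *\<^sub>R x) - (1/2) *\<^sub>R x = - (x :: 'a::real_vector)"
proof -
  have "(1/2 :: real) *\<^sub>R x + (1/2) *\<^sub>R x = x"
    by (simp flip: scaleR_add_left)
  then show ?thesis
    by (metis minus_add_distrib diff_conv_add_uminus)
qed

lemma minus_one_power_card_toggle:
  assumes "finite A" "finite B" "card (A - {z}) = card (B - {z})" "(z \<in> A) \<noteq> (z \<in> B)"
  shows "(-1 :: 'a::ring_1) ^ card A = - ((-1) ^ card B)"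
proof -
  have "card A + card B = 2 * card (A - {z}) + 1"
  proof (cases "z \<in> A")
    case True
    then have "B - {z} = B" using assms(4) by simp
    then show ?thesis using assms(3) card.remove[OF assms(1) True] by (simp only:)
  next
    case False
    then have "z \<in> B" "A - {z} = A" using assms(4) by simp_all
    then show ?thesis using assms(3) card.remove[OF assms(2) \<open>z \<in> B\<close>] by (simp only:)
  qed
  then have "odd (card A + card B)" by simp
  then show ?thesis
    by (auto simp: minus_one_power_iff)
qed

lemma prod_minus_one_if:
  assumes "finite A"
  shows "(\<Prod>x\<in>A. if x \<in> T then -1 else 1) = ((-1 :: 'a::comm_ring_1) ^ card (A \<inter> T))"
proof -
  have "(\<Prod>x\<in>A. if x \<in> T then -1 else 1) = (\<Prod>x\<in>A \<inter> {x. x \<in> T}. (-1 :: 'a)) * (\<Prod>x\<in>A \<inter> - {x. x \<in> T}. 1)"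
    by (rule prod.If_cases) (rule assms)
  then show ?thesis
    by simp
qed

definition sorted_prod_mset :: "(nat \<Rightarrow> 'a::monoid_mult) \<Rightarrow> nat multiset \<Rightarrow> 'a" where
  "sorted_prod_mset f M = prod_list (map f (sorted_list_of_multiset M))"

context
  fixes f :: "nat \<Rightarrow> 'a::monoid_mult" and A :: "nat set"
  assumes commute: "\<forall>i\<in>A. \<forall>j\<in>A. f i * f j = f j * f i"
begin

lemma prod_list_eq_sorted_prod_mset:
  assumes "set xs \<subseteq> A"
  shows "prod_list (map f xs) = sorted_prod_mset f (mset xs)"
  unfolding sorted_prod_mset_def
  by (rule prod_list_mset_eq[where C = "f ` A"]) (use commute assms in auto)

lemma sorted_prod_mset_add:
  assumes "t \<in> A" and "set_mset M \<subseteq> A"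
  shows "sorted_prod_mset f (add_mset t M) = f t * sorted_prod_mset f M"
proof -
  have "sorted_prod_mset f (add_mset t M) = prod_list (map f (t # sorted_list_of_multiset M))"
    by (subst prod_list_eq_sorted_prod_mset) (use assms in auto)
  then show ?thesis by (simp add: sorted_prod_mset_def)
qed

end

section \<open>Adjacent transpositions and the antisymmetry of the structure constants\<close>

abbreviation transp_adj :: "nat \<Rightarrow> nat \<Rightarrow> nat" where
  "transp_adj k \<equiv> transpose k (Suc k)"

lemma transp_adj_eq_iff [simp]: "transp_adj k x = transp_adj k y \<longleftrightarrow> x = y"
  by (rule inj_eq[OF inj_transpose])

lemma transp_adj_less_iff:
  "x \<noteq> y \<Longrightarrow> transp_adj k x < transp_adj k y \<longleftrightarrow> (x < y) \<noteq> ({x, y} = {k, Suc k})"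
  by (auto simp: transpose_def doubleton_eq_iff)

lemma transp_adj_less_length: "x < n \<Longrightarrow> Suc k < n \<Longrightarrow> transp_adj k x < n"
  by (simp add: transpose_def)

lemma minus_one_power_transp_adj:
  "(-1 :: 'a::ring_1) ^ transp_adj k x = (-1) ^ x * (if x \<in> {k, Suc k} then -1 else 1)"
  by (auto simp: transpose_def)

lemma tt_mem:
  assumes "eps a b c e \<noteq> 0"
  shows "tt a b c e \<in> {1..5}"
proof -
  have sub: "{a, b, c, e} \<subseteq> {1..5}" and four: "card {a, b, c, e} = 4"
    using assms by (auto simp: eps_def split: if_splits)
  have "card ({1..5::nat} - {a, b, c, e}) = 1"
    using four card_Diff_subset[OF _ sub] by simp
  then obtain t where t: "{1..5::nat} - {a, b, c, e} = {t}"
    by (meson card_1_singletonE)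
  then have "tt a b c e = t"
    unfolding tt_def by simp
  with t show ?thesis by blast
qed

lemma tt_cong: "{i, j, k, l} = {i', j', k', l'} \<Longrightarrow> tt i j k l = tt i' j' k' l'"
  unfolding tt_def by simp

definition inversions :: "nat list \<Rightarrow> (nat \<times> nat) set" where
  "inversions xs = {(a, b). a < b \<and> b < length xs \<and> xs ! a > xs ! b}"

lemma finite_inversions: "finite (inversions xs)"
  by (rule finite_subset[of _ "{..<length xs} \<times> {..<length xs}"]) (auto simp: inversions_def)

lemma inversions_swap_adjacent:
  assumes p: "Suc p < length xs"
  shows "inversions (xs[p := xs ! Suc p, Suc p := xs ! p]) - {(p, Suc p)} =
         map_prod (transp_adj p) (transp_adj p) -` (inversions xs - {(p, Suc p)})"
proof -
  define ys where "ys = xs[p := xs ! Suc p, Suc p := xs ! p]"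
  have ys: "ys ! i = xs ! transp_adj p i" if "i < length xs" for i
    using that p by (auto simp: ys_def transpose_def nth_list_update)
  have "(a, b) \<in> inversions ys - {(p, Suc p)} \<longleftrightarrow>
        (transp_adj p a, transp_adj p b) \<in> inversions xs - {(p, Suc p)}" for a b
  proof -
    have "(a < b \<and> (a, b) \<noteq> (p, Suc p)) \<longleftrightarrow>
          (transp_adj p a < transp_adj p b \<and> (transp_adj p a, transp_adj p b) \<noteq> (p, Suc p))"
      by (cases "a = b") (auto simp: transp_adj_less_iff doubleton_eq_iff transpose_def)
    moreover have "b < length xs \<longleftrightarrow> transp_adj p b < length xs"
      using p by (auto simp: transpose_def)
    moreover have "length ys = length xs"
      by (simp add: ys_def)
    ultimately show ?thesis
      unfolding inversions_def using ys by auto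
  qed
  then show ?thesis
    unfolding ys_def[symmetric] set_eq_iff split_paired_All vimage_eq map_prod_simp by blast
qed

lemma perm_sign_swap_adjacent:
  assumes p: "Suc p < length xs" and distinct: "xs ! p \<noteq> xs ! Suc p"
  shows "perm_sign (xs[p := xs ! Suc p, Suc p := xs ! p]) = - perm_sign xs"
proof -
  define ys where "ys = xs[p := xs ! Suc p, Suc p := xs ! p]"
  define z where "z = (p, Suc p)"
  have "map_prod (transp_adj p) (transp_adj p) \<circ> map_prod (transp_adj p) (transp_adj p) = id"
    by (simp add: map_prod.comp map_prod.id)
  then have "bij (map_prod (transp_adj p) (transp_adj p))"
    by (metis o_bij)
  then have "card (inversions ys - {z}) = card (inversions xs - {z})"
    unfolding ys_def z_def inversions_swap_adjacent[OF p]
    by (intro card_vimage_inj) (auto dest: bij_is_inj bij_is_surj)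
  moreover have "(z \<in> inversions ys) \<noteq> (z \<in> inversions xs)"
    using p distinct by (auto simp: ys_def z_def inversions_def nth_list_update)
  ultimately have "(-1 :: int) ^ card (inversions ys) = - ((-1) ^ card (inversions xs))"
    by (intro minus_one_power_card_toggle finite_inversions)
  then show ?thesis
    by (simp add: ys_def perm_sign_def inv_count_def inversions_def)
qed

lemma eps_swap_adjacent:
  assumes p: "Suc p < 4"
    and swapped: "[a', b', c', e'] = [a, b, c, e][p := [a, b, c, e] ! Suc p, Suc p := [a, b, c, e] ! p]"
  shows "eps a' b' c' e' = - eps a b c e"
proof -
  have set_eq: "{a', b', c', e'} = {a, b, c, e}"
    using p swapped by (auto simp: less_Suc_eq nth_list_update numeral_eq_Suc)
  define t where "t = tt a b c e"
  have t: "tt a' b' c' e' = t"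
    unfolding t_def by (rule tt_cong[OF set_eq])
  show ?thesis
  proof (cases "{a, b, c, e} \<subseteq> {1..5} \<and> card {a, b, c, e} = 4")
    case True
    then have distinct: "distinct [a, b, c, e]"
      by (intro card_distinct) simp
    then have "[a, b, c, e] ! p \<noteq> [a, b, c, e] ! Suc p"
      using p nth_eq_iff_index_eq[OF distinct, of p "Suc p"] by simp
    then have "perm_sign [a', b', c', e', t] = - perm_sign [a, b, c, e, t]"
      using p swapped perm_sign_swap_adjacent[of p "[a, b, c, e, t]"]
      by (auto simp: less_Suc_eq numeral_eq_Suc)
    with True show ?thesis
      by (simp only: eps_def set_eq t t_def) simp
  next
    case False
    then show ?thesis
      by (simp only: eps_def set_eq if_False)
  qed
qed

lemma eps_swap_first: "eps j i c e = - eps i j c e"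
  by (rule eps_swap_adjacent[of 0]) simp_all

lemma eps_swap_second: "eps a b e c = - eps a b c e"
  by (rule eps_swap_adjacent[of 2]) (simp_all add: numeral_eq_Suc)

section \<open>Crossing numbers\<close>

definition between :: "nat \<Rightarrow> nat \<Rightarrow> nat \<Rightarrow> bool" where
  "between c e x \<longleftrightarrow> c < x \<and> x < e \<or> e < x \<and> x < c"

lemma between_iff_less_xor: "x \<noteq> c \<Longrightarrow> x \<noteq> e \<Longrightarrow> between c e x \<longleftrightarrow> (c < x) \<noteq> (e < x)"
  unfolding between_def by auto

lemma crosses_doubleton:
  assumes "a \<noteq> b" "c \<noteq> e"
  shows "crosses {a, b} {c, e} \<longleftrightarrow> between c e a \<noteq> between c e b"
proof -
  have "{x \<in> {a, b}. Min {c, e} < x \<and> x < Max {c, e}} =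
        (if between c e a then {a} else {}) \<union> (if between c e b then {b} else {})"
    using assms by (auto simp: between_def min_def max_def)
  then show ?thesis
    unfolding crosses_def using assms by auto
qed

lemma crosses_doubleton_commute:
  assumes "distinct [a, b, c, e]"
  shows "crosses {a, b} {c, e} \<longleftrightarrow> crosses {c, e} {a, b}"
proof -
  have "a < c \<longleftrightarrow> \<not> c < a" "a < e \<longleftrightarrow> \<not> e < a" "b < c \<longleftrightarrow> \<not> c < b" "b < e \<longleftrightarrow> \<not> e < b"
    using assms by auto
  with assms show ?thesis
    by (simp add: crosses_doubleton between_iff_less_xor) blast
qed

lemma crosses_doubleton_transp_adj:
  assumes "distinct [a, b, c, e]"
  shows "crosses (transp_adj k ` {a, b}) (transp_adj k ` {c, e}) \<longleftrightarrow>
         crosses {a, b} {c, e} \<noteq> (k \<in> {a, b} \<and> Suc k \<in> {c, e} \<or> Suc k \<in> {a, b} \<and> k \<in> {c, e})"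
proof -
  let ?K = "{k, Suc k}"
  have less: "transp_adj k x < transp_adj k y \<longleftrightarrow> (x < y) \<noteq> ({y, x} = ?K)" if "x \<noteq> y" for x y
    using that by (auto simp: transp_adj_less_iff insert_commute)
  have "crosses (transp_adj k ` {a, b}) (transp_adj k ` {c, e}) \<longleftrightarrow>
      (((c < a) \<noteq> ({a, c} = ?K)) \<noteq> ((e < a) \<noteq> ({a, e} = ?K))) \<noteq>
      (((c < b) \<noteq> ({b, c} = ?K)) \<noteq> ((e < b) \<noteq> ({b, e} = ?K)))"
    using assms by (simp add: crosses_doubleton between_iff_less_xor less)
  \<comment> \<open>at most one of the four pairs is {k, Suc k}, so their exclusive or is their disjunction\<close>
  moreover have "\<not> ({a, c} = ?K \<and> {a, e} = ?K)" "\<not> ({b, c} = ?K \<and> {b, e} = ?K)"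
    "\<not> ({a, c} = ?K \<and> {b, c} = ?K)" "\<not> ({a, e} = ?K \<and> {b, e} = ?K)"
    "\<not> ({a, c} = ?K \<and> {b, e} = ?K)" "\<not> ({a, e} = ?K \<and> {b, c} = ?K)"
    using assms by (auto simp: doubleton_eq_iff)
  moreover have "(k \<in> {a, b} \<and> Suc k \<in> {c, e} \<or> Suc k \<in> {a, b} \<and> k \<in> {c, e}) \<longleftrightarrow>
      {a, c} = ?K \<or> {a, e} = ?K \<or> {b, c} = ?K \<or> {b, e} = ?K"
    by (auto simp: doubleton_eq_iff)
  moreover have "crosses {a, b} {c, e} \<longleftrightarrow> ((c < a) \<noteq> (e < a)) \<noteq> ((c < b) \<noteq> (e < b))"
    using assms by (simp add: crosses_doubleton between_iff_less_xor)
  ultimately show ?thesis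
    by argo
qed

lemma finite_sif: "finite (sif n)"
  by (rule finite_subset[of _ "Pow (Pow {0..<n})"]) (auto simp: sif_def)

lemma sif_memE:
  assumes "S \<in> sif n" "P \<in> S"
  obtains a b where "a < b" "b < n" "P = {a, b}"
proof -
  obtain x y where xy: "P = {x, y}" "x \<noteq> y" and sub: "P \<subseteq> {0..<n}"
    using assms by (auto simp: sif_def card_2_iff)
  then show ?thesis
    using that[of x y] that[of y x] by (cases "x < y") (auto simp: insert_commute)
qed

lemma sif_disjoint: "S \<in> sif n \<Longrightarrow> P \<in> S \<Longrightarrow> Q \<in> S \<Longrightarrow> P \<noteq> Q \<Longrightarrow> P \<inter> Q = {}"
  unfolding sif_def by blast

lemma Union_sif_subset: "S \<in> sif n \<Longrightarrow> \<Union>S \<subseteq> {0..<n}"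
  unfolding sif_def by blast

lemma finite_sif_member: "S \<in> sif n \<Longrightarrow> finite S"
  by (rule finite_subset[of _ "Pow {0..<n}"]) (auto simp: sif_def)

lemma sif_subset: "S \<in> sif n \<Longrightarrow> S' \<subseteq> S \<Longrightarrow> S' \<in> sif n"
  unfolding sif_def by blast

lemma insert_adjacent_in_sif:
  assumes "S \<in> sif n" "Suc k < n" "k \<notin> \<Union>S" "Suc k \<notin> \<Union>S"
  shows "insert {k, Suc k} S \<in> sif n"
  using assms unfolding sif_def by auto

definition swap_sif :: "nat \<Rightarrow> nat set set \<Rightarrow> nat set set" where
  "swap_sif k S = image (transp_adj k) ` S"

lemma swap_sif_swap_sif [simp]: "swap_sif k (swap_sif k S) = S"
  by (simp add: swap_sif_def image_image)

lemma mem_swap_sif: "P \<in> swap_sif k S \<longleftrightarrow> transp_adj k ` P \<in> S"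
proof
  assume "P \<in> swap_sif k S"
  then show "transp_adj k ` P \<in> S"
    by (auto simp: swap_sif_def image_image)
next
  assume "transp_adj k ` P \<in> S"
  then have "transp_adj k ` transp_adj k ` P \<in> swap_sif k S"
    unfolding swap_sif_def by blast
  then show "P \<in> swap_sif k S"
    by (simp add: image_image)
qed

lemma Union_swap_sif: "\<Union>(swap_sif k S) = transp_adj k ` \<Union>S"
  unfolding swap_sif_def by auto

lemma swap_sif_in_sif:
  assumes S: "S \<in> sif n" and k: "Suc k < n"
  shows "swap_sif k S \<in> sif n"
proof -
  have "P \<subseteq> {0..<n} \<and> card P = 2" if "P \<in> swap_sif k S" for P
  proof -
    have P': "transp_adj k ` P \<in> S"
      using that by (simp add: mem_swap_sif)
    have "card (transp_adj k ` P) = card P"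
      by (rule card_image) (simp add: inj_on_def)
    moreover have "transp_adj k ` P \<subseteq> {0..<n}"
      using P' S by (auto simp: sif_def)
    then have "x < n" if "x \<in> P" for x
      using that transp_adj_less_length[OF _ k, of "transp_adj k x"] by auto
    ultimately show ?thesis
      using P' S by (auto simp: sif_def)
  qed
  moreover have "P \<inter> Q = {}" if "P \<in> swap_sif k S" "Q \<in> swap_sif k S" "P \<noteq> Q" for P Q
  proof -
    have "transp_adj k ` P \<in> S" "transp_adj k ` Q \<in> S" "transp_adj k ` P \<noteq> transp_adj k ` Q"
      using that by (auto simp: mem_swap_sif inj_image_eq_iff[OF inj_transpose])
    then have "transp_adj k ` P \<inter> transp_adj k ` Q = {}"
      using sif_disjoint[OF S] by blast
    then show ?thesis
      by auto
  qed
  ultimately show ?thesis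
    unfolding sif_def by blast
qed

lemma ncross_insert_adjacent:
  assumes S: "S \<in> sif n" and k: "k \<notin> \<Union>S" "Suc k \<notin> \<Union>S"
  shows "ncross (insert {k, Suc k} S) = ncross S"
proof -
  have "\<not> crosses {k, Suc k} Q \<and> \<not> crosses Q {k, Suc k}" if Q: "Q \<in> S" for Q
  proof -
    obtain c e where ce: "c < e" "Q = {c, e}"
      using sif_memE[OF S Q] by blast
    moreover have "c \<notin> {k, Suc k}" "e \<notin> {k, Suc k}"
      using k Q ce by auto
    then have "c < Suc k \<longleftrightarrow> c < k" "e < Suc k \<longleftrightarrow> e < k" "Suc k < c \<longleftrightarrow> k < c" "Suc k < e \<longleftrightarrow> k < e"
      by auto
    ultimately show ?thesis
      using \<open>c \<notin> {k, Suc k}\<close> \<open>e \<notin> {k, Suc k}\<close>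
      by (auto simp: crosses_doubleton between_iff_less_xor)
  qed
  then have same: "P \<in> insert {k, Suc k} S \<and> Q \<in> insert {k, Suc k} S \<and> P \<noteq> Q \<and> crosses P Q \<longleftrightarrow>
             P \<in> S \<and> Q \<in> S \<and> P \<noteq> Q \<and> crosses P Q" for P Q
    by auto
  show ?thesis
    unfolding ncross_def by (simp only: same)
qed

lemma ncross_image:
  assumes f: "inj f"
  shows "ncross (image f ` S) = card {{P, Q} |P Q. P \<in> S \<and> Q \<in> S \<and> P \<noteq> Q \<and> crosses (f ` P) (f ` Q)}"
proof -
  let ?C = "{{P, Q} |P Q. P \<in> S \<and> Q \<in> S \<and> P \<noteq> Q \<and> crosses (f ` P) (f ` Q)}"
  have inj_image: "inj (image f)"
    using f by (simp add: inj_def inj_image_eq_iff)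
  then have inj_image2: "inj (image (image f))"
    by (simp add: inj_def inj_image_eq_iff)
  have "{{P', Q'} |P' Q'. P' \<in> image f ` S \<and> Q' \<in> image f ` S \<and> P' \<noteq> Q' \<and> crosses P' Q'} =
        image (image f) ` ?C"
  proof (intro equalityI subsetI)
    fix X assume "X \<in> {{P', Q'} |P' Q'. P' \<in> image f ` S \<and> Q' \<in> image f ` S \<and> P' \<noteq> Q' \<and> crosses P' Q'}"
    then obtain P Q where "X = {f ` P, f ` Q}" "P \<in> S" "Q \<in> S" "f ` P \<noteq> f ` Q" "crosses (f ` P) (f ` Q)"
      by blast
    then show "X \<in> image (image f) ` ?C"
      by (intro image_eqI[of _ _ "{P, Q}"]) auto
  next
    fix X assume "X \<in> image (image f) ` ?C"
    then obtain P Q where "X = {f ` P, f ` Q}" "P \<in> S" "Q \<in> S" "P \<noteq> Q" "crosses (f ` P) (f ` Q)"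
      by auto
    moreover have "f ` P \<noteq> f ` Q"
      using calculation inj_image by (simp add: inj_eq)
    ultimately show "X \<in> {{P', Q'} |P' Q'. P' \<in> image f ` S \<and> Q' \<in> image f ` S \<and> P' \<noteq> Q' \<and> crosses P' Q'}"
      by blast
  qed
  then show ?thesis
    unfolding ncross_def using inj_image2 by (simp add: card_image inj_on_subset)
qed

lemma doubleton_mem_doubletons:
  assumes "P1 \<noteq> Q1"
  shows "{P1, Q1} \<in> {{P, Q} |P Q. P \<in> S \<and> Q \<in> S \<and> P \<noteq> Q \<and> R P Q} \<longleftrightarrow>
         P1 \<in> S \<and> Q1 \<in> S \<and> (R P1 Q1 \<or> R Q1 P1)"
  using assms by (auto simp: doubleton_eq_iff)

lemma minus_one_power_card_doubletons_toggle:
  fixes R R' :: "'a \<Rightarrow> 'a \<Rightarrow> bool"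
  assumes fin: "finite S" and P1: "P1 \<in> S" and Q1: "Q1 \<in> S" and P1Q1: "P1 \<noteq> Q1"
    and R': "\<And>P Q. P \<in> S \<Longrightarrow> Q \<in> S \<Longrightarrow> P \<noteq> Q \<Longrightarrow> R' P Q \<longleftrightarrow> R P Q \<noteq> ({P, Q} = {P1, Q1})"
    and sym: "R Q1 P1 \<longleftrightarrow> R P1 Q1"
  shows "(-1 :: 'b::ring_1) ^ card {{P, Q} |P Q. P \<in> S \<and> Q \<in> S \<and> P \<noteq> Q \<and> R' P Q} =
         - ((-1) ^ card {{P, Q} |P Q. P \<in> S \<and> Q \<in> S \<and> P \<noteq> Q \<and> R P Q})"
proof (rule minus_one_power_card_toggle[where z = "{P1, Q1}"])
  have finite: "finite {{P, Q} |P Q. P \<in> S \<and> Q \<in> S \<and> P \<noteq> Q \<and> T P Q}" for T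
    by (rule finite_subset[of _ "(\<lambda>(P, Q). {P, Q}) ` (S \<times> S)"]) (use fin in auto)
  show "finite {{P, Q} |P Q. P \<in> S \<and> Q \<in> S \<and> P \<noteq> Q \<and> R' P Q}"
    "finite {{P, Q} |P Q. P \<in> S \<and> Q \<in> S \<and> P \<noteq> Q \<and> R P Q}"
    by (rule finite)+
  have "{{P, Q} |P Q. P \<in> S \<and> Q \<in> S \<and> P \<noteq> Q \<and> R' P Q} - {{P1, Q1}} =
        {{P, Q} |P Q. P \<in> S \<and> Q \<in> S \<and> P \<noteq> Q \<and> R P Q} - {{P1, Q1}}"
    using R' by blast
  then show "card ({{P, Q} |P Q. P \<in> S \<and> Q \<in> S \<and> P \<noteq> Q \<and> R' P Q} - {{P1, Q1}}) =
             card ({{P, Q} |P Q. P \<in> S \<and> Q \<in> S \<and> P \<noteq> Q \<and> R P Q} - {{P1, Q1}})"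
    by simp
  have "R' P1 Q1 \<longleftrightarrow> \<not> R P1 Q1" "R' Q1 P1 \<longleftrightarrow> \<not> R Q1 P1"
    using R'[OF P1 Q1 P1Q1] R'[OF Q1 P1 P1Q1[symmetric]] by (auto simp: insert_commute)
  then show "({P1, Q1} \<in> {{P, Q} |P Q. P \<in> S \<and> Q \<in> S \<and> P \<noteq> Q \<and> R' P Q}) \<noteq>
             ({P1, Q1} \<in> {{P, Q} |P Q. P \<in> S \<and> Q \<in> S \<and> P \<noteq> Q \<and> R P Q})"
    unfolding doubleton_mem_doubletons[OF P1Q1] using P1 Q1 sym by auto
qed

lemma sif_member_distinct:
  assumes S: "S \<in> sif n" "P \<in> S" "Q \<in> S" "P \<noteq> Q"
  obtains a b c e where "P = {a, b}" "Q = {c, e}" "distinct [a, b, c, e]"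
proof -
  obtain a b c e where "a < b" "P = {a, b}" "c < e" "Q = {c, e}"
    using sif_memE[OF S(1,2)] sif_memE[OF S(1,3)] by metis
  moreover have "P \<inter> Q = {}"
    by (rule sif_disjoint[OF S])
  ultimately show ?thesis
    using that by auto
qed

lemma crosses_sif_commute:
  assumes "S \<in> sif n" "P \<in> S" "Q \<in> S" "P \<noteq> Q"
  shows "crosses Q P \<longleftrightarrow> crosses P Q"
proof -
  obtain a b c e where "P = {a, b}" "Q = {c, e}" "distinct [a, b, c, e]"
    using sif_member_distinct[OF assms] .
  then show ?thesis
    by (simp add: crosses_doubleton_commute)
qed

lemma crosses_swap_sif_member:
  assumes "S \<in> sif n" "P \<in> S" "Q \<in> S" "P \<noteq> Q"
  shows "crosses (transp_adj k ` P) (transp_adj k ` Q) \<longleftrightarrow>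
         crosses P Q \<noteq> (k \<in> P \<and> Suc k \<in> Q \<or> Suc k \<in> P \<and> k \<in> Q)"
proof -
  obtain a b c e where "P = {a, b}" "Q = {c, e}" "distinct [a, b, c, e]"
    using sif_member_distinct[OF assms] .
  then show ?thesis
    by (simp only: crosses_doubleton_transp_adj)
qed

lemma crosses_swap_sif_linked:
  assumes S: "S \<in> sif n" and K: "{k, Suc k} \<notin> S"
    and P1: "P1 \<in> S" "k \<in> P1" and Q1: "Q1 \<in> S" "Suc k \<in> Q1"
  shows "P1 \<noteq> Q1"
    and "\<And>P Q. P \<in> S \<Longrightarrow> Q \<in> S \<Longrightarrow> P \<noteq> Q \<Longrightarrow>
           crosses (transp_adj k ` P) (transp_adj k ` Q) \<longleftrightarrow> crosses P Q \<noteq> ({P, Q} = {P1, Q1})"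
proof -
  show "P1 \<noteq> Q1"
  proof
    assume "P1 = Q1"
    moreover obtain a b where "P1 = {a, b}"
      using sif_memE[OF S P1(1)] by blast
    ultimately have "P1 = {k, Suc k}"
      using P1 Q1 by auto
    then show False
      using K P1 by simp
  qed
  fix P Q assume PQ: "P \<in> S" "Q \<in> S" "P \<noteq> Q"
  have "k \<in> P \<and> Suc k \<in> Q \<or> Suc k \<in> P \<and> k \<in> Q \<longleftrightarrow> {P, Q} = {P1, Q1}"
    using PQ P1 Q1 sif_disjoint[OF S] by (auto simp: doubleton_eq_iff)
  then show "crosses (transp_adj k ` P) (transp_adj k ` Q) \<longleftrightarrow> crosses P Q \<noteq> ({P, Q} = {P1, Q1})"
    using crosses_swap_sif_member[OF S PQ, of k] by (simp only:)
qed

lemma minus_one_power_ncross_swap_sif: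
  assumes S: "S \<in> sif n" and K: "{k, Suc k} \<notin> S"
  shows "(-1 :: 'a::ring_1) ^ ncross (swap_sif k S) =
         (if k \<in> \<Union>S \<and> Suc k \<in> \<Union>S then -1 else 1) * (-1) ^ ncross S"
proof -
  have ncross_swap: "ncross (swap_sif k S) =
      card {{P, Q} |P Q. P \<in> S \<and> Q \<in> S \<and> P \<noteq> Q \<and> crosses (transp_adj k ` P) (transp_adj k ` Q)}"
    unfolding swap_sif_def by (rule ncross_image) (rule inj_transpose)
  show ?thesis
  proof (cases "k \<in> \<Union>S \<and> Suc k \<in> \<Union>S")
    case True
    then obtain P1 Q1 where P1: "P1 \<in> S" "k \<in> P1" and Q1: "Q1 \<in> S" "Suc k \<in> Q1"
      by blast
    note linked = crosses_swap_sif_linked[OF S K P1 Q1]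
    have "(-1 :: 'a) ^ ncross (swap_sif k S) = - ((-1) ^ ncross S)"
      unfolding ncross_swap unfolding ncross_def
      using minus_one_power_card_doubletons_toggle[OF finite_sif_member[OF S] P1(1) Q1(1) linked(1),
          where R = crosses and R' = "\<lambda>P Q. crosses (transp_adj k ` P) (transp_adj k ` Q)"]
        linked crosses_sif_commute[OF S Q1(1) P1(1)]
      by simp
    then show ?thesis
      using True by simp
  next
    case False
    then have same: "P \<in> S \<and> Q \<in> S \<and> P \<noteq> Q \<and> crosses (transp_adj k ` P) (transp_adj k ` Q) \<longleftrightarrow>
                     P \<in> S \<and> Q \<in> S \<and> P \<noteq> Q \<and> crosses P Q" for P Q
      using crosses_swap_sif_member[OF S, of P Q k] by blast
    have "ncross (swap_sif k S) = ncross S"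
      unfolding ncross_swap unfolding ncross_def by (simp only: same)
    then show ?thesis
      using False by (simp only: if_False mult_1)
  qed
qed

section \<open>Splitting SIF at a pair of adjacent positions\<close>

definition sif_avoiding :: "nat \<Rightarrow> nat \<Rightarrow> nat set set set" where
  "sif_avoiding n k = {S \<in> sif n. k \<notin> \<Union>S \<and> Suc k \<notin> \<Union>S}"

definition sif_touching :: "nat \<Rightarrow> nat \<Rightarrow> nat set set set" where
  "sif_touching n k = {S \<in> sif n. {k, Suc k} \<notin> S \<and> (k \<in> \<Union>S \<or> Suc k \<in> \<Union>S)}"

lemma sif_containing_adjacent:
  assumes k: "Suc k < n"
  shows "{S \<in> sif n. {k, Suc k} \<in> S} = insert {k, Suc k} ` sif_avoiding n k"
proof (intro equalityI subsetI)
  fix S assume "S \<in> {S \<in> sif n. {k, Suc k} \<in> S}"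
  then have S: "S \<in> sif n" "{k, Suc k} \<in> S"
    by auto
  then have "S - {{k, Suc k}} \<in> sif_avoiding n k"
    using sif_disjoint[OF S(1) _ S(2)] sif_subset[OF S(1)]
    by (auto simp: sif_avoiding_def)
  moreover have "S = insert {k, Suc k} (S - {{k, Suc k}})"
    using S by auto
  ultimately show "S \<in> insert {k, Suc k} ` sif_avoiding n k"
    by blast
qed (use insert_adjacent_in_sif[OF _ k] in \<open>auto simp: sif_avoiding_def\<close>)

lemma sum_sif_split:
  assumes k: "Suc k < n"
  shows "sum f (sif n) =
         (\<Sum>S\<in>sif_avoiding n k. f (insert {k, Suc k} S) + f S) + sum f (sif_touching n k)"
proof -
  let ?X = "{S \<in> sif n. {k, Suc k} \<in> S}"
  have "sif n = ?X \<union> sif_avoiding n k \<union> sif_touching n k"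
    by (auto simp: sif_avoiding_def sif_touching_def)
  then have split: "sum f (sif n) = sum f (?X \<union> sif_avoiding n k \<union> sif_touching n k)"
    by (rule arg_cong)
  have "inj_on (insert {k, Suc k}) (sif_avoiding n k)"
  proof (rule inj_onI)
    fix S S' assume "S \<in> sif_avoiding n k" "S' \<in> sif_avoiding n k"
      and "insert {k, Suc k} S = insert {k, Suc k} S'"
    moreover have "{k, Suc k} \<notin> S" "{k, Suc k} \<notin> S'"
      using calculation by (auto simp: sif_avoiding_def)
    ultimately show "S = S'"
      by (simp add: insert_ident)
  qed
  then have "sum f ?X = (\<Sum>S\<in>sif_avoiding n k. f (insert {k, Suc k} S))"
    unfolding sif_containing_adjacent[OF k] by (simp add: sum.reindex)
  moreover have "sum f (?X \<union> sif_avoiding n k \<union> sif_touching n k) =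
      sum f ?X + sum f (sif_avoiding n k) + sum f (sif_touching n k)"
  proof -
    have "finite (sif_avoiding n k)" "finite (sif_touching n k)" "finite ?X"
      by (auto intro: finite_subset[OF _ finite_sif] simp: sif_avoiding_def sif_touching_def)
    moreover have "?X \<inter> sif_avoiding n k = {}" "(?X \<union> sif_avoiding n k) \<inter> sif_touching n k = {}"
      by (auto simp: sif_avoiding_def sif_touching_def)
    ultimately show ?thesis
      by (simp add: sum.union_disjoint)
  qed
  ultimately show ?thesis
    unfolding split by (simp add: sum.distrib)
qed

lemma swap_sif_in_sif_touching:
  assumes k: "Suc k < n" and S: "S \<in> sif_touching n k"
  shows "swap_sif k S \<in> sif_touching n k"
proof -
  have "{k, Suc k} \<notin> swap_sif k S"
    using S by (simp add: mem_swap_sif sif_touching_def insert_commute)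
  moreover have "k \<in> \<Union>(swap_sif k S) \<longleftrightarrow> Suc k \<in> \<Union>S" "Suc k \<in> \<Union>(swap_sif k S) \<longleftrightarrow> k \<in> \<Union>S"
    by (simp_all only: Union_swap_sif in_transpose_image_iff transpose_apply_first transpose_apply_second)
  ultimately show ?thesis
    using S swap_sif_in_sif[OF _ k] unfolding sif_touching_def by blast
qed

lemma sum_sif_touching_swap:
  assumes "Suc k < n"
  shows "(\<Sum>S\<in>sif_touching n k. f (swap_sif k S)) = sum f (sif_touching n k)"
  by (rule sum.reindex_bij_witness[where i = "swap_sif k" and j = "swap_sif k"])
    (auto intro: swap_sif_in_sif_touching[OF assms])

lemma minus_one_power_ncross_touching:
  assumes S: "S \<in> sif_touching n k"
  shows "(-1 :: 'a::ring_1) ^ ncross (swap_sif k S) * (-1) ^ card (\<Union>S \<inter> {k, Suc k}) = - ((-1) ^ ncross S)"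
proof -
  have S_sif: "S \<in> sif n" and K: "{k, Suc k} \<notin> S" and touch: "k \<in> \<Union>S \<or> Suc k \<in> \<Union>S"
    using S by (auto simp: sif_touching_def)
  show ?thesis
  proof (cases "k \<in> \<Union>S \<and> Suc k \<in> \<Union>S")
    case True
    then have "\<Union>S \<inter> {k, Suc k} = {k, Suc k}"
      by auto
    then show ?thesis
      using True minus_one_power_ncross_swap_sif[OF S_sif K] by simp
  next
    case False
    then have "card (\<Union>S \<inter> {k, Suc k}) = 1"
      using touch by (auto simp: card_1_singleton_iff Int_insert_right)
    moreover have "(-1 :: 'a) ^ ncross (swap_sif k S) = (-1) ^ ncross S"
      using minus_one_power_ncross_swap_sif[OF S_sif K] by (simp only: if_not_P[OF False] mult_1)
    ultimately show ?thesis
      by simp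
  qed
qed

section \<open>The factors D_S\<close>

definition sif_pairs :: "nat \<Rightarrow> nat set set \<Rightarrow> (nat \<times> nat) set" where
  "sif_pairs n S = {(k, l). k < l \<and> l < n \<and> {k, l} \<in> S}"

lemma finite_sif_pairs: "finite (sif_pairs n S)"
  by (rule finite_subset[of _ "{..<n} \<times> {..<n}"]) (auto simp: sif_pairs_def)

lemma bij_betw_sif_pairs:
  assumes S: "S \<in> sif n"
  shows "bij_betw (\<lambda>(k, l). {k, l}) (sif_pairs n S) S"
proof (rule bij_betwI')
  fix p q assume "p \<in> sif_pairs n S" "q \<in> sif_pairs n S"
  then show "((\<lambda>(k, l). {k, l}) p = (\<lambda>(k, l). {k, l}) q) \<longleftrightarrow> p = q"
    by (auto simp: sif_pairs_def doubleton_eq_iff)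
next
  fix P assume "P \<in> S"
  then obtain a b where "a < b" "b < n" "P = {a, b}"
    using sif_memE[OF S] by blast
  with \<open>P \<in> S\<close> show "\<exists>p \<in> sif_pairs n S. P = (\<lambda>(k, l). {k, l}) p"
    by (auto simp: sif_pairs_def)
qed (auto simp: sif_pairs_def)

lemma prod_sif_pairs:
  fixes h :: "nat \<Rightarrow> 'a::comm_monoid_mult"
  assumes S: "S \<in> sif n"
  shows "(\<Prod>(k, l)\<in>sif_pairs n S. h k * h l) = (\<Prod>x\<in>\<Union>S. h x)"
proof -
  have "(\<Prod>x\<in>\<Union>S. h x) = (\<Prod>P\<in>S. \<Prod>x\<in>P. h x)"
    using sif_disjoint[OF S] finite_subset[OF _ finite_atLeastLessThan] S
    by (subst prod.Union_disjoint) (auto simp: sif_def)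
  also have "\<dots> = (\<Prod>(k, l)\<in>sif_pairs n S. \<Prod>x\<in>{k, l}. h x)"
    using prod.reindex_bij_betw[OF bij_betw_sif_pairs[OF S], of "\<lambda>P. \<Prod>x\<in>P. h x"]
    by (simp add: case_prod_beta)
  also have "\<dots> = (\<Prod>(k, l)\<in>sif_pairs n S. h k * h l)"
    by (rule prod.cong) (auto simp: sif_pairs_def)
  finally show ?thesis ..
qed

lemma sif_pairs_insert_adjacent:
  assumes "Suc k < n" "k \<notin> \<Union>S"
  shows "sif_pairs n (insert {k, Suc k} S) = insert (k, Suc k) (sif_pairs n S)"
    and "(k, Suc k) \<notin> sif_pairs n S"
  using assms by (auto simp: sif_pairs_def doubleton_eq_iff)

lemma sif_pairs_swap_sif:
  assumes S: "S \<in> sif n" and k: "Suc k < n" and K: "{k, Suc k} \<notin> S"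
  shows "sif_pairs n (swap_sif k S) = map_prod (transp_adj k) (transp_adj k) ` sif_pairs n S"
proof -
  have "(x < y \<and> y < n \<and> {transp_adj k x, transp_adj k y} \<in> S) \<longleftrightarrow>
        (transp_adj k x < transp_adj k y \<and> transp_adj k y < n \<and> {transp_adj k x, transp_adj k y} \<in> S)"
    for x y
  proof (cases "{transp_adj k x, transp_adj k y} \<in> S")
    case True
    then obtain a b where ab: "a < b" "b < n" "{transp_adj k x, transp_adj k y} = {a, b}"
      using sif_memE[OF S] by blast
    then have "x \<noteq> y" "transp_adj k x < n" "transp_adj k y < n"
      by (auto simp: doubleton_eq_iff)
    then have "y < n"
      using transp_adj_less_length[OF _ k, of "transp_adj k y"] by simp
    moreover have "{x, y} \<noteq> {k, Suc k}"
      using True K by (auto simp: doubleton_eq_iff insert_commute)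
    ultimately show ?thesis
      using True \<open>x \<noteq> y\<close> \<open>transp_adj k y < n\<close> by (simp add: transp_adj_less_iff)
  qed simp
  then have "sif_pairs n (swap_sif k S) = map_prod (transp_adj k) (transp_adj k) -` sif_pairs n S"
    by (auto simp: sif_pairs_def mem_swap_sif)
  also have "\<dots> = map_prod (transp_adj k) (transp_adj k) ` sif_pairs n S"
    by (rule vimage_involution) (simp add: map_prod_def case_prod_beta)
  finally show ?thesis .
qed

definition eps_at :: "idx \<Rightarrow> nat \<Rightarrow> nat \<Rightarrow> int" where
  "eps_at I k l = eps (fst (I ! k)) (snd (I ! k)) (fst (I ! l)) (snd (I ! l))"

definition Dcoeff :: "idx \<Rightarrow> nat \<Rightarrow> nat \<Rightarrow> real" where
  "Dcoeff I k l = (-1) ^ (k + l) * real_of_int (eps_at I k l) / 2"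

text \<open>Where eps vanishes, the index 1 stands in for t, so that all indices stay in [5],
  where the generators del commute.\<close>

definition Dindex :: "idx \<Rightarrow> nat \<Rightarrow> nat \<Rightarrow> nat" where
  "Dindex I k l =
     (if eps_at I k l = 0 then 1 else tt (fst (I ! k)) (snd (I ! k)) (fst (I ! l)) (snd (I ! l)))"

lemma Dindex_mem: "Dindex I k l \<in> {1..5}"
  using tt_mem by (auto simp: Dindex_def eps_at_def)

lemma Dkl_eq: "Dkl del I k l = of_real (Dcoeff I k l) * del (Dindex I k l)"
proof -
  obtain a b where ab: "I ! k = (a, b)" by fastforce
  obtain c e where ce: "I ! l = (c, e)" by fastforce
  have "(1/2 :: real) *\<^sub>R (of_int ((-1) ^ (k + l) * z) * x) =
        of_real ((-1) ^ (k + l) * real_of_int z / 2) * x" for z and x :: 'a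
  proof -
    have "(-1) ^ (k + l) * real_of_int z / 2 = (1/2) * real_of_int ((-1) ^ (k + l) * z)"
      by simp
    then have "of_real ((-1) ^ (k + l) * real_of_int z / 2) = of_real (1/2) * (of_int ((-1) ^ (k + l) * z) :: 'a)"
      by (simp only: of_real_mult of_real_of_int_eq)
    then show ?thesis
      by (simp add: scaleR_conv_of_real mult.assoc)
  qed
  then show ?thesis
    by (cases "eps a b c e = 0") (simp_all add: Dkl_def Dcoeff_def Dindex_def eps_at_def ab ce)
qed

lemma DS_eq_prod_list:
  "DS del I S = prod_list (map (\<lambda>(k, l). Dkl del I k l)
     (filter (\<lambda>(k, l). k < l \<and> {k, l} \<in> S) (List.product [0..<length I] [0..<length I])))"
  unfolding DS_def prod_list_map_filter_if[symmetric] prod_list_map_product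
  by (simp only: case_prod_conv conj_commute)

lemma set_sif_pairs_list:
  "set (filter (\<lambda>(k, l). k < l \<and> {k, l} \<in> S) (List.product [0..<n] [0..<n])) = sif_pairs n S"
  unfolding sif_pairs_def by fastforce

context
  fixes del :: "nat \<Rightarrow> 'a::real_algebra_1"
  assumes del_commute: "\<forall>i\<in>{1..5}. \<forall>j\<in>{1..5}. del i * del j = del j * del i"
begin

lemma DS_eq:
  "DS del I S = of_real (\<Prod>(k, l)\<in>sif_pairs (length I) S. Dcoeff I k l) *
     sorted_prod_mset del (image_mset (\<lambda>(k, l). Dindex I k l) (mset_set (sif_pairs (length I) S)))"
proof -
  define ps where "ps = filter (\<lambda>(k, l). k < l \<and> {k, l} \<in> S) (List.product [0..<length I] [0..<length I])"
  have distinct: "distinct ps" and set_ps: "set ps = sif_pairs (length I) S"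
    unfolding ps_def by (simp add: distinct_product) (rule set_sif_pairs_list)
  have "DS del I S = prod_list (map (\<lambda>(k, l). of_real (Dcoeff I k l) * del (Dindex I k l)) ps)"
    unfolding DS_eq_prod_list ps_def by (intro arg_cong[where f = prod_list] map_cong) (auto simp: Dkl_eq)
  also have "\<dots> = of_real (prod_list (map (\<lambda>(k, l). Dcoeff I k l) ps)) *
                  prod_list (map del (map (\<lambda>(k, l). Dindex I k l) ps))"
    using prod_list_of_real_mult[of "\<lambda>p. Dcoeff I (fst p) (snd p)" "\<lambda>p. del (Dindex I (fst p) (snd p))" ps]
    by (simp add: case_prod_unfold o_def)
  also have "prod_list (map (\<lambda>(k, l). Dcoeff I k l) ps) = (\<Prod>(k, l)\<in>sif_pairs (length I) S. Dcoeff I k l)"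
    using distinct set_ps by (metis prod.distinct_set_conv_list)
  also have "prod_list (map del (map (\<lambda>(k, l). Dindex I k l) ps)) =
      sorted_prod_mset del (mset (map (\<lambda>(k, l). Dindex I k l) ps))"
    by (rule prod_list_eq_sorted_prod_mset[OF del_commute]) (use Dindex_mem in auto)
  also have "mset (map (\<lambda>(k, l). Dindex I k l) ps) =
      image_mset (\<lambda>(k, l). Dindex I k l) (mset_set (sif_pairs (length I) S))"
    using mset_set_set[OF distinct] set_ps by simp
  finally show ?thesis .
qed

lemma DS_reindex:
  fixes h :: "nat \<Rightarrow> real"
  assumes S: "S \<in> sif n" and I: "length I = n" and J: "length J = n" and f: "inj f"
    and pairs: "sif_pairs n S' = map_prod f f ` sif_pairs n S"
    and coeff: "\<And>k l. (k, l) \<in> sif_pairs n S \<Longrightarrow> Dcoeff J (f k) (f l) = Dcoeff I k l * (h k * h l)"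
    and index: "\<And>k l. (k, l) \<in> sif_pairs n S \<Longrightarrow> Dindex J (f k) (f l) = Dindex I k l"
  shows "DS del J S' = of_real (\<Prod>x\<in>\<Union>S. h x) * DS del I S"
proof -
  have inj: "inj_on (map_prod f f) (sif_pairs n S)"
    using f by (auto intro: inj_onI simp: inj_eq)
  have "(\<Prod>(k, l)\<in>sif_pairs n S'. Dcoeff J k l) = (\<Prod>(k, l)\<in>sif_pairs n S. Dcoeff J (f k) (f l))"
    unfolding pairs by (simp add: prod.reindex[OF inj] case_prod_beta)
  also have "\<dots> = (\<Prod>(k, l)\<in>sif_pairs n S. Dcoeff I k l * (h k * h l))"
    by (rule prod.cong) (auto intro: coeff)
  also have "\<dots> = (\<Prod>(k, l)\<in>sif_pairs n S. Dcoeff I k l) * (\<Prod>x\<in>\<Union>S. h x)"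
    by (simp add: prod.distrib case_prod_beta prod_sif_pairs[OF S, symmetric])
  finally have coeffs: "(\<Prod>(k, l)\<in>sif_pairs n S'. Dcoeff J k l) = \<dots>" .
  have "image_mset (\<lambda>(k, l). Dindex J k l) (mset_set (sif_pairs n S')) =
        image_mset (\<lambda>(k, l). Dindex J (f k) (f l)) (mset_set (sif_pairs n S))"
    unfolding pairs image_mset_mset_set[OF inj, symmetric] multiset.map_comp
    by (rule image_mset_cong) auto
  also have "\<dots> = image_mset (\<lambda>(k, l). Dindex I k l) (mset_set (sif_pairs n S))"
    by (rule image_mset_cong) (use finite_sif_pairs index in auto)
  finally show ?thesis
    unfolding DS_eq I J coeffs by (simp add: of_real_def)
qed

lemma DS_insert:
  assumes new: "(k, l) \<notin> sif_pairs (length I) S"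
    and pairs: "sif_pairs (length I) S' = insert (k, l) (sif_pairs (length I) S)"
  shows "DS del I S' = Dkl del I k l * DS del I S"
proof -
  define M where "M = image_mset (\<lambda>(k, l). Dindex I k l) (mset_set (sif_pairs (length I) S))"
  have "set_mset M \<subseteq> {1..5}"
    using Dindex_mem by (auto simp: M_def)
  then have "sorted_prod_mset del (add_mset (Dindex I k l) M) = del (Dindex I k l) * sorted_prod_mset del M"
    using sorted_prod_mset_add[OF del_commute, of "Dindex I k l" M] Dindex_mem by blast
  then show ?thesis
    unfolding DS_eq pairs Dkl_eq using finite_sif_pairs new
    by (simp flip: M_def) (simp add: of_real_def ac_simps)
qed

end

lemma DS_cong:
  assumes "length J = length I" and "\<And>i. i \<in> \<Union>S \<Longrightarrow> J ! i = I ! i"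
  shows "DS del J S = DS del I S"
proof -
  have "Dkl del J k l = Dkl del I k l" if "{k, l} \<in> S" for k l
  proof -
    have "J ! k = I ! k" "J ! l = I ! l"
      using that assms(2) by blast+
    then show ?thesis
      by (simp add: Dkl_def)
  qed
  then show ?thesis
    by (simp add: DS_def assms(1) cong: if_cong)
qed

section \<open>Index tuples and their terms\<close>

lemma nths_cong: "(\<And>i. i < length xs \<Longrightarrow> i \<in> A \<longleftrightarrow> i \<in> B) \<Longrightarrow> nths xs A = nths xs B"
  unfolding nths_def by (intro arg_cong[where f = "map fst"] filter_cong) (auto simp: set_zip)

lemma take_nth_nth_drop:
  assumes "Suc p < length xs"
  shows "xs = take p xs @ [xs ! p, xs ! Suc p] @ drop (Suc (Suc p)) xs"
  using assms id_take_nth_drop[of p xs] Cons_nth_drop_Suc[of "Suc p" xs] by simp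

lemma valid_idx_iff: "valid_idx I \<longleftrightarrow> set I \<subseteq> {1..5} \<times> {1..5}"
  unfolding valid_idx_def by auto

lemma valid_idx_CS: "valid_idx I \<Longrightarrow> valid_idx (CS I S)"
  unfolding valid_idx_def CS_def by (auto dest: in_set_nthsD)

lemma dmon_Nil: "dmon dd [] = 1"
  by (simp add: dmon_def)

lemma dmon_append: "dmon dd (I @ J) = dmon dd I * dmon dd J"
  by (simp add: dmon_def)

lemma dmon_Cons: "dmon dd (x # I) = dd (fst x) (snd x) * dmon dd I"
  by (simp add: dmon_def case_prod_beta)

lemma CS_adjacent:
  "CS (L @ [u, v] @ R) S =
     CS L S @ (if length L \<in> \<Union>S then [] else [u]) @ (if Suc (length L) \<in> \<Union>S then [] else [v]) @
     nths R {j. Suc (Suc (j + length L)) \<notin> \<Union>S}"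
  by (simp add: CS_def nths_append nths_Cons)

lemma CS_single:
  "CS (L @ [u] @ R) S =
     CS L S @ (if length L \<in> \<Union>S then [] else [u]) @ nths R {j. Suc (j + length L) \<notin> \<Union>S}"
  by (simp add: CS_def nths_append nths_Cons)

lemma nth_swap_adjacent:
  assumes "i < length (L @ [x, y] @ R)"
  shows "(L @ [y, x] @ R) ! transp_adj (length L) i = (L @ [x, y] @ R) ! i"
proof -
  consider "i < length L" | "i = length L" | "i = Suc (length L)" | "Suc (length L) < i"
    by linarith
  then show ?thesis
    by cases (auto simp: nth_append transpose_def nth_Cons split: nat.split)
qed

lemma nth_swap_adjacent_other:
  assumes "i \<noteq> length L" "i \<noteq> Suc (length L)"
  shows "(L @ [y, x] @ R) ! i = (L @ [x, y] @ R) ! i"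
  using assms nth_swap_adjacent[of i L x y R] by (cases "i < length (L @ [x, y] @ R)") (auto simp: nth_append)

lemma nth_replace_other: "i \<noteq> length L \<Longrightarrow> (L @ [u] @ R) ! i = (L @ [v] @ R) ! i"
  by (cases "i < length L") (auto simp: nth_append nth_Cons split: nat.split)

definition omega_term :: "(nat \<Rightarrow> 'a::real_algebra_1) \<Rightarrow> (nat \<Rightarrow> nat \<Rightarrow> 'a) \<Rightarrow> idx \<Rightarrow> nat set set \<Rightarrow> 'a" where
  "omega_term del dd I S = of_int ((-1) ^ ncross S) * DS del I S * dmon dd (CS I S)"

lemma omega_eq_sum: "omega del dd I = (\<Sum>S\<in>sif (length I). omega_term del dd I S)"
  unfolding omega_def omega_term_def ..

lemma DS_swap_avoiding:
  assumes k: "k = length L" and S: "S \<in> sif_avoiding (length (L @ [x, y] @ R)) k"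
  shows "DS del (L @ [y, x] @ R) S = DS del (L @ [x, y] @ R) S"
proof (rule DS_cong)
  fix i assume "i \<in> \<Union>S"
  then have "i \<noteq> k" "i \<noteq> Suc k"
    using S by (auto simp: sif_avoiding_def)
  then show "(L @ [y, x] @ R) ! i = (L @ [x, y] @ R) ! i"
    unfolding k by (rule nth_swap_adjacent_other)
qed simp

lemma CS_insert_adjacent:
  assumes "k = length L"
  shows "CS (L @ [u, v] @ R) (insert {k, Suc k} S) = CS L S @ nths R {j. Suc (Suc (j + k)) \<notin> \<Union>S}"
proof -
  have "CS L (insert {k, Suc k} S) = CS L S"
    unfolding CS_def using assms by (intro nths_cong) auto
  moreover have "{j. Suc (Suc (j + k)) \<notin> \<Union>(insert {k, Suc k} S)} = {j. Suc (Suc (j + k)) \<notin> \<Union>S}"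
    by auto
  ultimately show ?thesis
    unfolding CS_adjacent assms[symmetric] by simp
qed

lemma CS_swap_touching:
  assumes k: "k = length L" and touch: "k \<in> \<Union>S \<or> Suc k \<in> \<Union>S"
  shows "CS (L @ [y, x] @ R) (swap_sif k S) = CS (L @ [x, y] @ R) S"
proof -
  define U where "U = \<Union>S"
  define U' where "U' = \<Union>(swap_sif k S)"
  have mem: "i \<in> U' \<longleftrightarrow> transp_adj k i \<in> U" for i
    unfolding U_def U'_def by (simp only: Union_swap_sif in_transpose_image_iff)
  have same: "i \<in> U' \<longleftrightarrow> i \<in> U" if "i \<noteq> k" "i \<noteq> Suc k" for i
    using that by (simp add: mem transpose_def)
  have "nths L (- U') = nths L (- U)"
    using k same by (intro nths_cong) simp
  moreover have "{j. Suc (Suc (j + k)) \<notin> U'} = {j. Suc (Suc (j + k)) \<notin> U}"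
    using same by simp
  moreover have "k \<in> U' \<longleftrightarrow> Suc k \<in> U" "Suc k \<in> U' \<longleftrightarrow> k \<in> U"
    by (simp_all add: mem)
  ultimately show ?thesis
    using touch unfolding CS_adjacent k[symmetric] unfolding CS_def U_def[symmetric] U'_def[symmetric] by auto
qed

locale reversed_entry =
  fixes I I' :: idx and k :: nat
  assumes length_eq: "length I' = length I"
    and nth_k: "I' ! k = prod.swap (I ! k)"
    and nth_other: "\<And>i. i \<noteq> k \<Longrightarrow> I' ! i = I ! i"
begin

lemma eps_at_eq:
  assumes "a \<noteq> b"
  shows "eps_at I' a b = (if a = k \<or> b = k then -1 else 1) * eps_at I a b"
proof -
  consider "a = k" | "b = k" | "a \<noteq> k" "b \<noteq> k"
    by blast
  then show ?thesis
  proof cases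
    case 1
    then show ?thesis
      using assms eps_swap_first[of "snd (I ! k)" "fst (I ! k)"] by (simp add: eps_at_def nth_k nth_other)
  next
    case 2
    then show ?thesis
      using assms eps_swap_second[of _ _ "snd (I ! k)" "fst (I ! k)"] by (simp add: eps_at_def nth_k nth_other)
  qed (simp add: eps_at_def nth_other)
qed

lemma Dindex_eq:
  assumes "a \<noteq> b"
  shows "Dindex I' a b = Dindex I a b"
proof -
  have "tt (fst (I' ! a)) (snd (I' ! a)) (fst (I' ! b)) (snd (I' ! b)) =
        tt (fst (I ! a)) (snd (I ! a)) (fst (I ! b)) (snd (I ! b))"
  proof (rule tt_cong)
    have pair: "{fst (I' ! i), snd (I' ! i)} = {fst (I ! i), snd (I ! i)}" for i
      by (cases "i = k") (simp_all add: nth_k nth_other insert_commute)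
    then show "{fst (I' ! a), snd (I' ! a), fst (I' ! b), snd (I' ! b)} =
               {fst (I ! a), snd (I ! a), fst (I ! b), snd (I ! b)}"
      using pair[of a] pair[of b] by blast
  qed
  then show ?thesis
    using eps_at_eq[OF assms] by (simp add: Dindex_def)
qed

lemma DS_eq_sign:
  assumes del_commute: "\<forall>i\<in>{1..5}. \<forall>j\<in>{1..5}. del i * del j = del j * del i"
    and S: "S \<in> sif (length I)"
  shows "DS del I' S = (if k \<in> \<Union>S then -1 else 1) * DS del I S"
proof -
  define h :: "nat \<Rightarrow> real" where "h x = (if x \<in> {k} then -1 else 1)" for x
  have "DS del I' S = of_real (\<Prod>x\<in>\<Union>S. h x) * DS del I S"
  proof (rule DS_reindex[OF del_commute S refl length_eq inj_on_id])
    fix a b assume "(a, b) \<in> sif_pairs (length I) S"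
    then have "a \<noteq> b"
      by (simp add: sif_pairs_def)
    then show "Dcoeff I' (id a) (id b) = Dcoeff I a b * (h a * h b)"
      "Dindex I' (id a) (id b) = Dindex I a b"
      by (auto simp: Dcoeff_def h_def eps_at_eq Dindex_eq)
  qed (simp add: map_prod.id)
  moreover have "(\<Prod>x\<in>\<Union>S. h x) = (-1) ^ card (\<Union>S \<inter> {k})"
    unfolding h_def using finite_subset[OF Union_sif_subset[OF S]] by (intro prod_minus_one_if) simp
  ultimately show ?thesis
    by (cases "k \<in> \<Union>S") simp_all
qed

end

lemma reversed_entry_middle: "reversed_entry (L @ [z] @ R) (L @ [prod.swap z] @ R) (length L)"
  by unfold_locales (simp_all add: nth_append nth_replace_other)

section \<open>Consequences of the defining relations\<close>

context
  fixes del :: "nat \<Rightarrow> 'a::real_algebra_1" and dd :: "nat \<Rightarrow> nat \<Rightarrow> 'a"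
  assumes rels: "Uminus_rels del dd"
begin

lemma del_commute: "\<forall>i\<in>{1..5}. \<forall>j\<in>{1..5}. del i * del j = del j * del i"
  using rels unfolding Uminus_rels_def by blast

lemma del_dd_commute:
  assumes "i \<in> {1..5}" "x \<in> {1..5} \<times> {1..5}"
  shows "del i * dd (fst x) (snd x) = dd (fst x) (snd x) * del i"
  using rels assms unfolding Uminus_rels_def mem_Times_iff by blast

lemma dd_swap:
  assumes "x \<in> {1..5} \<times> {1..5}"
  shows "dd (snd x) (fst x) = - dd (fst x) (snd x)"
proof -
  have "dd (fst x) (snd x) = - dd (snd x) (fst x)"
    using rels assms unfolding Uminus_rels_def mem_Times_iff by blast
  then show ?thesis
    by simp
qed

lemma anticommutator_eq:
  assumes "x \<in> {1..5} \<times> {1..5}" "y \<in> {1..5} \<times> {1..5}"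
  shows "dmon dd [x, y] + dmon dd [y, x] =
         of_int (eps (fst x) (snd x) (fst y) (snd y)) * del (tt (fst x) (snd x) (fst y) (snd y))"
proof -
  have "dd (fst x) (snd x) * dd (fst y) (snd y) + dd (fst y) (snd y) * dd (fst x) (snd x) =
        of_int (eps (fst x) (snd x) (fst y) (snd y)) * del (tt (fst x) (snd x) (fst y) (snd y))"
    using rels assms unfolding Uminus_rels_def mem_Times_iff by blast
  then show ?thesis
    by (simp add: dmon_def case_prod_beta)
qed

text \<open>By anticommutator_eq an anticommutator of two generators d is a multiple of a single
  del t; this is why it is central.\<close>

lemma eps_del_commute:
  assumes "\<And>t. t \<in> {1..5} \<Longrightarrow> del t * z = z * del t"
  shows "(of_int (eps a b c e) * del (tt a b c e)) * z = z * (of_int (eps a b c e) * del (tt a b c e))"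
proof (cases "eps a b c e = 0")
  case False
  then have "del (tt a b c e) * z = z * del (tt a b c e)"
    using assms tt_mem by blast
  have "(of_int (eps a b c e) * del (tt a b c e)) * z = of_int (eps a b c e) * (z * del (tt a b c e))"
    using \<open>del (tt a b c e) * z = z * del (tt a b c e)\<close> by (simp add: mult.assoc)
  also have "\<dots> = z * (of_int (eps a b c e) * del (tt a b c e))"
    by (simp only: mult.assoc[symmetric] mult_of_int_commute[of _ z])
  finally show ?thesis .
qed simp

lemma anticommutator_commute_DS:
  assumes "x \<in> {1..5} \<times> {1..5}" "y \<in> {1..5} \<times> {1..5}"
  shows "(dmon dd [x, y] + dmon dd [y, x]) * DS del I S = DS del I S * (dmon dd [x, y] + dmon dd [y, x])"
proof -
  define B where "B = dmon dd [x, y] + dmon dd [y, x]"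
  define M where "M = image_mset (\<lambda>(k, l). Dindex I k l) (mset_set (sif_pairs (length I) S))"
  have B: "B * del t = del t * B" if "t \<in> {1..5}" for t
    unfolding B_def anticommutator_eq[OF assms] by (rule eps_del_commute) (use del_commute that in blast)
  have "set_mset M \<subseteq> {1..5}"
    using Dindex_mem by (auto simp: M_def)
  then have "B * y = y * B" if "y \<in> set (map del (sorted_list_of_multiset M))" for y
    using that B by auto
  then have BM: "B * sorted_prod_mset del M = sorted_prod_mset del M * B"
    unfolding sorted_prod_mset_def by (rule prod_list_commute)
  have "B * (of_real r * sorted_prod_mset del M) = of_real r * (B * sorted_prod_mset del M)" for r
    by (simp only: mult.assoc[symmetric] mult_of_real_commute[of r B])
  then show ?thesis
    unfolding DS_eq[OF del_commute] B_def[symmetric] M_def[symmetric] BM by (simp only: mult.assoc)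
qed

lemma anticommutator_commute_dmon:
  assumes "x \<in> {1..5} \<times> {1..5}" "y \<in> {1..5} \<times> {1..5}" and J: "valid_idx J"
  shows "(dmon dd [x, y] + dmon dd [y, x]) * dmon dd J = dmon dd J * (dmon dd [x, y] + dmon dd [y, x])"
proof -
  have "(dmon dd [x, y] + dmon dd [y, x]) * dd (fst z) (snd z) = dd (fst z) (snd z) * (dmon dd [x, y] + dmon dd [y, x])"
    if "z \<in> set J" for z
    unfolding anticommutator_eq[OF assms(1,2)]
    using that J del_dd_commute by (intro eps_del_commute) (auto simp: valid_idx_iff)
  then show ?thesis
    unfolding dmon_def by (intro prod_list_commute) (auto simp: case_prod_beta)
qed

lemma Dkl_adjacent:
  assumes "x \<in> {1..5} \<times> {1..5}" "y \<in> {1..5} \<times> {1..5}"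
  shows "Dkl del (L @ [x, y] @ R) (length L) (Suc (length L)) = - ((1/2) *\<^sub>R (dmon dd [x, y] + dmon dd [y, x]))"
  by (simp add: Dkl_def anticommutator_eq[OF assms] nth_append case_prod_beta)

lemma DS_insert_adjacent:
  assumes xy: "x \<in> {1..5} \<times> {1..5}" "y \<in> {1..5} \<times> {1..5}" and k: "k = length L"
    and S: "S \<in> sif_avoiding (length (L @ [x, y] @ R)) k"
  shows "DS del (L @ [x, y] @ R) (insert {k, Suc k} S) =
         - ((1/2) *\<^sub>R ((dmon dd [x, y] + dmon dd [y, x]) * DS del (L @ [x, y] @ R) S))"
proof -
  have "Suc k < length (L @ [x, y] @ R)" "k \<notin> \<Union>S"
    using S by (auto simp: k sif_avoiding_def)
  then have "DS del (L @ [x, y] @ R) (insert {k, Suc k} S) =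
      Dkl del (L @ [x, y] @ R) k (Suc k) * DS del (L @ [x, y] @ R) S"
    using sif_pairs_insert_adjacent by (intro DS_insert[OF del_commute]) auto
  then show ?thesis
    unfolding k Dkl_adjacent[OF xy] by simp
qed

lemma omega_terms_avoiding_cancel:
  assumes valid: "valid_idx (L @ [x, y] @ R)" and k: "k = length L"
    and S: "S \<in> sif_avoiding (length (L @ [x, y] @ R)) k"
  shows "omega_term del dd (L @ [x, y] @ R) (insert {k, Suc k} S) + omega_term del dd (L @ [x, y] @ R) S +
         (omega_term del dd (L @ [y, x] @ R) (insert {k, Suc k} S) + omega_term del dd (L @ [y, x] @ R) S) = 0"
proof -
  define I where "I = L @ [x, y] @ R"
  define J where "J = L @ [y, x] @ R"
  have xy: "x \<in> {1..5} \<times> {1..5}" "y \<in> {1..5} \<times> {1..5}" and valid_L: "valid_idx L"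
    using valid by (auto simp: valid_idx_iff)
  have S_sif: "S \<in> sif (length I)" and uncovered: "k \<notin> \<Union>S" "Suc k \<notin> \<Union>S"
    using S by (auto simp: sif_avoiding_def I_def)
  define s where "s = (of_int ((-1) ^ ncross S) :: 'a)"
  define D where "D = DS del I S"
  define B where "B = dmon dd [x, y] + dmon dd [y, x]"
  define M1 where "M1 = dmon dd (CS L S)"
  define M2 where "M2 = dmon dd (nths R {j. Suc (Suc (j + k)) \<notin> \<Union>S})"
  have DJ: "DS del J S = D"
    unfolding D_def I_def J_def by (rule DS_swap_avoiding[OF k S])
  have "DS del I (insert {k, Suc k} S) = - ((1/2) *\<^sub>R (B * D))"
    unfolding I_def B_def D_def by (rule DS_insert_adjacent[OF xy k S])
  moreover have "DS del J (insert {k, Suc k} S) = - ((1/2) *\<^sub>R (B * D))"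
    using DS_insert_adjacent[OF xy(2,1) k, of S R] S DJ
    unfolding I_def J_def B_def D_def by (simp add: add.commute)
  moreover have "CS I (insert {k, Suc k} S) = CS L S @ nths R {j. Suc (Suc (j + k)) \<notin> \<Union>S}"
    "CS J (insert {k, Suc k} S) = CS L S @ nths R {j. Suc (Suc (j + k)) \<notin> \<Union>S}"
    unfolding I_def J_def by (simp_all only: CS_insert_adjacent[OF k])
  ultimately have inserted: "omega_term del dd I (insert {k, Suc k} S) + omega_term del dd J (insert {k, Suc k} S) =
      - (s * (B * D) * (M1 * M2))"
    unfolding omega_term_def ncross_insert_adjacent[OF S_sif uncovered]
    by (simp add: s_def M1_def M2_def dmon_append minus_half_diff_half)
  have "CS I S = CS L S @ [x, y] @ nths R {j. Suc (Suc (j + k)) \<notin> \<Union>S}"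
    "CS J S = CS L S @ [y, x] @ nths R {j. Suc (Suc (j + k)) \<notin> \<Union>S}"
    unfolding I_def J_def CS_adjacent using uncovered by (simp_all add: k)
  then have "omega_term del dd I S + omega_term del dd J S = s * D * (M1 * (B * M2))"
    unfolding omega_term_def DJ
    by (simp add: s_def D_def M1_def M2_def B_def dmon_append dmon_Cons dmon_Nil algebra_simps)
  moreover have "B * D = D * B" and "B * M1 = M1 * B"
    unfolding B_def D_def M1_def
    by (rule anticommutator_commute_DS[OF xy], rule anticommutator_commute_dmon[OF xy])
      (rule valid_idx_CS[OF valid_L])
  then have "s * (B * D) * (M1 * M2) = s * D * (M1 * (B * M2))"
    by (metis mult.assoc)
  ultimately show ?thesis
    using inserted unfolding I_def J_def by (simp add: algebra_simps)
qed

lemma DS_swap_adjacent: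
  assumes k: "k = length L" and S: "S \<in> sif (length (L @ [x, y] @ R))" and K: "{k, Suc k} \<notin> S"
  shows "DS del (L @ [y, x] @ R) (swap_sif k S) =
         of_real ((-1) ^ card (\<Union>S \<inter> {k, Suc k})) * DS del (L @ [x, y] @ R) S"
proof -
  define n where "n = length (L @ [x, y] @ R)"
  define h :: "nat \<Rightarrow> real" where "h x = (if x \<in> {k, Suc k} then -1 else 1)" for x
  have kn: "Suc k < n"
    by (simp add: n_def k)
  have nth: "(L @ [y, x] @ R) ! transp_adj k i = (L @ [x, y] @ R) ! i" if "i < n" for i
    using that unfolding n_def k by (rule nth_swap_adjacent)
  have "DS del (L @ [y, x] @ R) (swap_sif k S) = of_real (\<Prod>x\<in>\<Union>S. h x) * DS del (L @ [x, y] @ R) S"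
  proof (rule DS_reindex[OF del_commute S[folded n_def] n_def[symmetric] _ inj_transpose])
    show "sif_pairs n (swap_sif k S) = map_prod (transp_adj k) (transp_adj k) ` sif_pairs n S"
      by (rule sif_pairs_swap_sif[OF S[folded n_def] kn K])
  next
    fix a b assume "(a, b) \<in> sif_pairs n S"
    then have "a < n" "b < n"
      by (auto simp: sif_pairs_def)
    have eps: "eps_at (L @ [y, x] @ R) (transp_adj k a) (transp_adj k b) = eps_at (L @ [x, y] @ R) a b"
      unfolding eps_at_def nth[OF \<open>a < n\<close>] nth[OF \<open>b < n\<close>] by (rule refl)
    then show "Dcoeff (L @ [y, x] @ R) (transp_adj k a) (transp_adj k b) = Dcoeff (L @ [x, y] @ R) a b * (h a * h b)"
      by (simp add: Dcoeff_def power_add minus_one_power_transp_adj h_def)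
    show "Dindex (L @ [y, x] @ R) (transp_adj k a) (transp_adj k b) = Dindex (L @ [x, y] @ R) a b"
      unfolding Dindex_def eps nth[OF \<open>a < n\<close>] nth[OF \<open>b < n\<close>] by (rule refl)
  qed (simp add: n_def)
  moreover have "(\<Prod>x\<in>\<Union>S. h x) = (-1) ^ card (\<Union>S \<inter> {k, Suc k})"
    unfolding h_def using finite_subset[OF Union_sif_subset[OF S]] by (intro prod_minus_one_if) simp
  ultimately show ?thesis
    by simp
qed

lemma omega_term_swap_touching:
  assumes k: "k = length L" and S: "S \<in> sif_touching (length (L @ [x, y] @ R)) k"
  shows "omega_term del dd (L @ [y, x] @ R) (swap_sif k S) = - omega_term del dd (L @ [x, y] @ R) S"
proof -
  have S_sif: "S \<in> sif (length (L @ [x, y] @ R))" and K: "{k, Suc k} \<notin> S"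
    and touch: "k \<in> \<Union>S \<or> Suc k \<in> \<Union>S"
    using S by (auto simp: sif_touching_def)
  show ?thesis
    unfolding omega_term_def DS_swap_adjacent[OF k S_sif K] CS_swap_touching[OF k touch]
    by (simp add: mult.assoc[symmetric]) (simp add: minus_one_power_ncross_touching[OF S])
qed

lemma omega_swap_adjacent:
  assumes valid: "valid_idx (L @ [x, y] @ R)"
  shows "omega del dd (L @ [y, x] @ R) = - omega del dd (L @ [x, y] @ R)"
proof -
  define n where "n = length (L @ [x, y] @ R)"
  define k where "k = length L"
  define tI where "tI = omega_term del dd (L @ [x, y] @ R)"
  define tJ where "tJ = omega_term del dd (L @ [y, x] @ R)"
  have kn: "Suc k < n"
    by (simp add: n_def k_def)
  have "sum tJ (sif_touching n k) = (\<Sum>S\<in>sif_touching n k. tJ (swap_sif k S))"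
    by (rule sum_sif_touching_swap[OF kn, symmetric])
  also have "\<dots> = (\<Sum>S\<in>sif_touching n k. - tI S)"
  proof (rule sum.cong[OF refl])
    fix S assume "S \<in> sif_touching n k"
    then show "tJ (swap_sif k S) = - tI S"
      unfolding tI_def tJ_def n_def by (intro omega_term_swap_touching k_def)
  qed
  also have "\<dots> = - sum tI (sif_touching n k)"
    by (simp add: sum_negf)
  finally have touching: "sum tI (sif_touching n k) + sum tJ (sif_touching n k) = 0"
    by simp
  have avoiding: "(\<Sum>S\<in>sif_avoiding n k. tI (insert {k, Suc k} S) + tI S) +
                  (\<Sum>S\<in>sif_avoiding n k. tJ (insert {k, Suc k} S) + tJ S) = 0"
    unfolding tI_def tJ_def n_def k_def sum.distrib[symmetric]
    using omega_terms_avoiding_cancel[OF valid refl] by (intro sum.neutral) simp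
  have "omega del dd (L @ [x, y] @ R) + omega del dd (L @ [y, x] @ R) = 0"
    unfolding omega_eq_sum tI_def[symmetric] tJ_def[symmetric]
    using sum_sif_split[OF kn, of tI] sum_sif_split[OF kn, of tJ] touching avoiding
    by (simp add: n_def algebra_simps)
  then show ?thesis
    by (simp add: eq_neg_iff_add_eq_0 add.commute)
qed

lemma omega_reverse_entry:
  assumes valid: "valid_idx (L @ [z] @ R)"
  shows "omega del dd (L @ [prod.swap z] @ R) = - omega del dd (L @ [z] @ R)"
proof -
  have z: "z \<in> {1..5} \<times> {1..5}"
    using valid by (simp add: valid_idx_iff)
  note DS = reversed_entry.DS_eq_sign[OF reversed_entry_middle del_commute]
  have "omega_term del dd (L @ [prod.swap z] @ R) S = - omega_term del dd (L @ [z] @ R) S"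
    if S: "S \<in> sif (length (L @ [z] @ R))" for S
  proof (cases "length L \<in> \<Union>S")
    case True
    then have "CS (L @ [prod.swap z] @ R) S = CS (L @ [z] @ R) S"
      unfolding CS_single by simp
    then show ?thesis
      unfolding omega_term_def DS[OF S] using True by simp
  next
    case False
    then have "dmon dd (CS (L @ [prod.swap z] @ R) S) = - dmon dd (CS (L @ [z] @ R) S)"
      unfolding CS_single by (simp add: dmon_append dmon_Cons dd_swap[OF z])
    then show ?thesis
      unfolding omega_term_def DS[OF S] using False by simp
  qed
  then show ?thesis
    unfolding omega_eq_sum by (simp add: sum_negf)
qed

lemma omega_eq_0_if_repeated:
  assumes "valid_idx I" "j < k" "k < length I" "I ! j = I ! k"
  shows "omega del dd I = 0"
  using assms
proof (induction k arbitrary: I)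
  case (Suc k)
  define I' where "I' = take k I @ [I ! Suc k, I ! k] @ drop (Suc (Suc k)) I"
  have split: "I = take k I @ [I ! k, I ! Suc k] @ drop (Suc (Suc k)) I"
    using Suc.prems by (intro take_nth_nth_drop) simp
  have "omega del dd I' = - omega del dd (take k I @ [I ! k, I ! Suc k] @ drop (Suc (Suc k)) I)"
    unfolding I'_def by (rule omega_swap_adjacent) (simp only: split[symmetric] Suc.prems(1))
  then have swap: "omega del dd I' = - omega del dd I"
    by (simp only: split[symmetric])
  show ?case
  proof (cases "j = k")
    case True
    then have "I' = I"
      using Suc.prems split unfolding I'_def by simp
    then show ?thesis
      using swap by (intro self_eq_neg_imp_zero) simp
  next
    case False
    have length: "length (take k I) = k"
      using Suc.prems by simp
    have "set I' \<subseteq> set I"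
      using Suc.prems(3) unfolding I'_def by (auto dest: in_set_takeD in_set_dropD)
    then have "valid_idx I'"
      using Suc.prems(1) unfolding valid_idx_def by blast
    moreover have "j < k" "k < length I'" "I' ! j = I' ! k"
      using False Suc.prems length unfolding I'_def by (auto simp: nth_append)
    ultimately have "omega del dd I' = 0"
      by (rule Suc.IH)
    then show ?thesis
      using swap by simp
  qed
qed simp

lemma omega_eq_0_if_reversed:
  assumes valid: "valid_idx I" and jk: "j \<le> k" "k < length I" and rev: "I ! j = prod.swap (I ! k)"
  shows "omega del dd I = 0"
proof -
  define I' where "I' = take k I @ [prod.swap (I ! k)] @ drop (Suc k) I"
  have split: "I = take k I @ [I ! k] @ drop (Suc k) I"
    using jk by (simp add: id_take_nth_drop)
  have "omega del dd I' = - omega del dd (take k I @ [I ! k] @ drop (Suc k) I)"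
    unfolding I'_def by (rule omega_reverse_entry) (simp only: split[symmetric] valid)
  then have reverse: "omega del dd I' = - omega del dd I"
    by (simp only: split[symmetric])
  show ?thesis
  proof (cases "j = k")
    case True
    then have "I' = I"
      using rev split unfolding I'_def by simp
    then show ?thesis
      using reverse by (intro self_eq_neg_imp_zero) simp
  next
    case False
    have "set I' \<subseteq> insert (prod.swap (I ! k)) (set I)"
      unfolding I'_def by (auto dest: in_set_takeD in_set_dropD)
    moreover have "I ! k \<in> {1..5} \<times> {1..5}"
      using valid jk by (auto simp: valid_idx_iff)
    ultimately have "valid_idx I'"
      using valid by (auto simp: valid_idx_iff)
    moreover have "j < k" "k < length I'" "I' ! j = I' ! k"
      using False jk rev unfolding I'_def by (auto simp: nth_append)
    ultimately have "omega del dd I' = 0"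
      by (rule omega_eq_0_if_repeated)
    then show ?thesis
      using reverse by simp
  qed
qed

end

theorem corollary5p7:
  fixes del :: "nat \<Rightarrow> 'a::real_algebra_1" and dd :: "nat \<Rightarrow> nat \<Rightarrow> 'a" and I :: idx
  assumes "Uminus_rels del dd" and "valid_idx I"
  shows "((\<exists>j k. j < k \<and> k < length I \<and> I ! j = I ! k) \<longrightarrow> omega del dd I = 0) \<and>
         ((\<exists>j k. j \<le> k \<and> k < length I \<and> I ! j = prod.swap (I ! k)) \<longrightarrow> omega del dd I = 0)"
  using omega_eq_0_if_repeated[OF assms] omega_eq_0_if_reversed[OF assms] by blast

end
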